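(* Let $d:\mathbb{Z}\to\mathbb{C}$ with $d(n)\to0$ as $|n|\to\infty$, and let $(Ju)(n)=u(n-1)+d(n)u(n)+u(n+1)$ on $\ell^2(\mathbb{Z})$. Suppose that (i) for every $n\in\mathbb{Z}$, $\Im(d(n))=0$ or $\Im(d(n+1))=0$; (ii) $\Im(d(n))\ne0$ for infinitely many $n\in\mathbb{Z}$. If $\sum_{k\in\mathbb{Z}}|k|\,|\Re(d(k))|<\infty$, then $J$ has no boundary eigenvalues.
   Context: The numerical range is $\operatorname{Num}(J)=\{\langle Ju,u\rangle:\|u\|=1\}$, and a boundary eigenvalue of $J$ is an eigenvalue of $J$ lying in the topological boundary of $\operatorname{Num}(J)$. *)

theory Defs
  imports "HOL-Analysis.Analysis"
begin

definition l2Z :: "(int \<Rightarrow> complex) set" where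
  "l2Z = {u. (\<lambda>n. (cmod (u n))\<^sup>2) summable_on UNIV}"

definition jacobi :: "(int \<Rightarrow> complex) \<Rightarrow> (int \<Rightarrow> complex) \<Rightarrow> int \<Rightarrow> complex" where
  "jacobi d u n = u (n - 1) + d n * u n + u (n + 1)"

definition l2Z_inner :: "(int \<Rightarrow> complex) \<Rightarrow> (int \<Rightarrow> complex) \<Rightarrow> complex" where
  "l2Z_inner v u = (\<Sum>\<^sub>\<infinity>n. v n * cnj (u n))"

definition l2Z_norm :: "(int \<Rightarrow> complex) \<Rightarrow> real" where
  "l2Z_norm u = sqrt (\<Sum>\<^sub>\<infinity>n. (cmod (u n))\<^sup>2)"

definition numrange :: "(int \<Rightarrow> complex) \<Rightarrow> complex set" where
  "numrange d = {l2Z_inner (jacobi d u) u | u. u \<in> l2Z \<and> l2Z_norm u = 1}"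

definition is_eigenvalue :: "(int \<Rightarrow> complex) \<Rightarrow> complex \<Rightarrow> bool" where
  "is_eigenvalue d mu \<longleftrightarrow> (\<exists>u\<in>l2Z. u \<noteq> (\<lambda>_. 0) \<and> jacobi d u = (\<lambda>n. mu * u n))"

definition boundary_eigenvalue :: "(int \<Rightarrow> complex) \<Rightarrow> complex \<Rightarrow> bool" where
  "boundary_eigenvalue d mu \<longleftrightarrow> is_eigenvalue d mu \<and> mu \<in> frontier (numrange d)"

end

theory Submission
  imports Defs "HOL-Analysis.Analysis"
begin

text \<open>
  Proof idea.  Let J u = mu u with u a unit vector and mu on the boundary of Num(J).

  The defect w = (mu - cnj mu - d + cnj d) u = 2i (Im mu - Im d) u is orthogonal
  to u and satisfies <J w, u> = <w, w>.  If w \<noteq> 0, the values <Jv,v> on unit vectors v in the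
  span of u and w fill a full disc around mu, so mu is interior to Num(J).  Hence a boundary
  eigenvector vanishes wherever Im d \<noteq> Im mu.

  If Im mu \<noteq> 0, then since d \<rightarrow> 0 the eigenvector vanishes far out, hence
  everywhere by unique continuation of y(n-1) + y(n+1) = c(n) y(n).  If mu is real, the real and
  imaginary parts of the eigenvector solve a real recurrence y(n-1) + y(n+1) = (r - Re d(n)) y(n)
  and vanish on the infinite set where Im d \<noteq> 0.  On a half-line containing infinitely many of
  these zeros, an energy argument (|r| < 2), monotone growth (|r| > 2) or a discrete variation
  of constants using the first moment of Re d (|r| = 2) produces two consecutive zeros, so the
  solution vanishes.
\<close>

subsection \<open>The sequence space l^2(Z)\<close>

lemma l2Z_iff: "u \<in> l2Z \<longleftrightarrow> (\<lambda>n. (cmod (u n))\<^sup>2) summable_on UNIV"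
  by (simp add: l2Z_def)

lemma l2Z_add:
  assumes "u \<in> l2Z" "v \<in> l2Z" shows "(\<lambda>n. u n + v n) \<in> l2Z"
proof -
  have dom: "(\<lambda>n. 2 * (cmod (u n))\<^sup>2 + 2 * (cmod (v n))\<^sup>2) summable_on UNIV"
    using assms by (intro summable_on_add summable_on_cmult_right) (auto simp: l2Z_iff)
  have "(cmod (u n + v n))\<^sup>2 \<le> 2 * (cmod (u n))\<^sup>2 + 2 * (cmod (v n))\<^sup>2" for n
  proof -
    have "(cmod (u n + v n))\<^sup>2 \<le> (cmod (u n) + cmod (v n))\<^sup>2"
      by (simp add: power_mono norm_triangle_ineq)
    also have "\<dots> \<le> 2 * (cmod (u n))\<^sup>2 + 2 * (cmod (v n))\<^sup>2"
      using sum_squares_bound[of "cmod (u n)" "cmod (v n)"] by (simp add: power2_sum)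
    finally show ?thesis .
  qed
  then show ?thesis
    unfolding l2Z_iff by (intro summable_on_comparison_test[OF dom]) auto
qed

lemma l2Z_mult_bounded:
  assumes "u \<in> l2Z" "\<And>n. cmod (c n) \<le> B" shows "(\<lambda>n. c n * u n) \<in> l2Z"
proof -
  have dom: "(\<lambda>n. B\<^sup>2 * (cmod (u n))\<^sup>2) summable_on UNIV"
    using assms by (intro summable_on_cmult_right) (auto simp: l2Z_iff)
  have "(cmod (c n * u n))\<^sup>2 \<le> B\<^sup>2 * (cmod (u n))\<^sup>2" for n
    using power_mono[OF assms(2)[of n] norm_ge_zero, of 2]
    by (simp add: norm_mult power_mult_distrib mult_right_mono)
  then show ?thesis
    unfolding l2Z_iff by (intro summable_on_comparison_test[OF dom]) auto
qed

lemma l2Z_cmult: "u \<in> l2Z \<Longrightarrow> (\<lambda>n. c * u n) \<in> l2Z"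
  using l2Z_mult_bounded[of u "\<lambda>_. c" "cmod c"] by simp

lemma bij_shift: "bij_betw (\<lambda>n::int. n + k) UNIV UNIV"
  by (rule bij_betwI[where g = "\<lambda>n. n - k"]) auto

lemma l2Z_shift: "u \<in> l2Z \<Longrightarrow> (\<lambda>n. u (n + k)) \<in> l2Z"
  using summable_on_reindex_bij_betw[OF bij_shift[of k], of "\<lambda>n. (cmod (u n))\<^sup>2"]
  by (simp add: l2Z_iff)

lemma l2Z_shift_minus: "u \<in> l2Z \<Longrightarrow> (\<lambda>n. u (n - k)) \<in> l2Z"
  using l2Z_shift[of u "- k"] by simp

lemma jacobi_l2Z:
  assumes "u \<in> l2Z" "\<And>n. cmod (d n) \<le> B" shows "jacobi d u \<in> l2Z"
  unfolding jacobi_def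
  by (intro l2Z_add l2Z_shift l2Z_shift_minus l2Z_mult_bounded[OF assms(1,2)] assms(1))

subsection \<open>The inner product\<close>

lemma l2Z_prod_summable:
  assumes "u \<in> l2Z" "v \<in> l2Z"
  shows "(\<lambda>n. u n * cnj (v n)) summable_on UNIV"
proof (rule abs_summable_summable)
  have dom: "(\<lambda>n. (cmod (u n))\<^sup>2 + (cmod (v n))\<^sup>2) summable_on UNIV"
    using assms by (intro summable_on_add) (auto simp: l2Z_iff)
  have "norm (u n * cnj (v n)) \<le> (cmod (u n))\<^sup>2 + (cmod (v n))\<^sup>2" for n
  proof -
    have "cmod (u n) * cmod (v n) \<le> (cmod (u n))\<^sup>2 + (cmod (v n))\<^sup>2"
      using sum_squares_bound[of "cmod (u n)" "cmod (v n)"]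
        mult_nonneg_nonneg[OF norm_ge_zero norm_ge_zero, of "u n" "v n"] by linarith
    then show ?thesis by (simp add: norm_mult)
  qed
  then show "(\<lambda>n. norm (u n * cnj (v n))) summable_on UNIV"
    by (rule Infinite_Sum.abs_summable_on_comparison_test'[OF dom])
qed

lemma inner_cnj: "cnj (l2Z_inner u v) = l2Z_inner v u"
  unfolding l2Z_inner_def
  by (metis (no_types, lifting) infsum_cnj infsum_cong complex_cnj_cnj complex_cnj_mult mult.commute)

lemma inner_add_left:
  assumes "u \<in> l2Z" "v \<in> l2Z" "w \<in> l2Z"
  shows "l2Z_inner (\<lambda>n. u n + v n) w = l2Z_inner u w + l2Z_inner v w"
  unfolding l2Z_inner_def
  using infsum_add[OF l2Z_prod_summable[OF assms(1,3)] l2Z_prod_summable[OF assms(2,3)]]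
  by (simp add: distrib_right)

lemma inner_add_right:
  assumes "u \<in> l2Z" "v \<in> l2Z" "w \<in> l2Z"
  shows "l2Z_inner w (\<lambda>n. u n + v n) = l2Z_inner w u + l2Z_inner w v"
  by (metis assms inner_add_left inner_cnj complex_cnj_add)

lemma inner_scale_left:
  "u \<in> l2Z \<Longrightarrow> v \<in> l2Z \<Longrightarrow> l2Z_inner (\<lambda>n. c * u n) v = c * l2Z_inner u v"
  unfolding l2Z_inner_def
  by (subst infsum_cmult_right[symmetric]) (auto simp: mult.assoc l2Z_prod_summable)

lemma inner3_left:
  assumes "a \<in> l2Z" "b \<in> l2Z" "c \<in> l2Z" "x \<in> l2Z"
  shows "l2Z_inner (\<lambda>n. p * a n + q * b n + r * c n) x
     = p * l2Z_inner a x + q * l2Z_inner b x + r * l2Z_inner c x"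
proof -
  have "l2Z_inner (\<lambda>n. p * a n + q * b n + r * c n) x
      = l2Z_inner (\<lambda>n. p * a n) x + l2Z_inner (\<lambda>n. q * b n) x + l2Z_inner (\<lambda>n. r * c n) x"
    using assms by (simp add: inner_add_left l2Z_add l2Z_cmult)
  then show ?thesis using assms by (simp add: inner_scale_left)
qed

lemma inner3_right:
  assumes "a \<in> l2Z" "b \<in> l2Z" "c \<in> l2Z" "x \<in> l2Z"
  shows "l2Z_inner x (\<lambda>n. p * a n + q * b n + r * c n)
     = cnj p * l2Z_inner x a + cnj q * l2Z_inner x b + cnj r * l2Z_inner x c"
  by (metis (no_types, lifting) inner3_left[OF assms, of p q r] inner_cnj complex_cnj_add complex_cnj_mult)

lemma inner_shift: "l2Z_inner (\<lambda>n. u (n + 1)) v = l2Z_inner u (\<lambda>n. v (n - 1))"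
  unfolding l2Z_inner_def
  using infsum_reindex_bij_betw[OF bij_shift[of 1], of "\<lambda>n. u n * cnj (v (n - 1))"] by simp

lemma inner_shift_minus: "l2Z_inner (\<lambda>n. u (n - 1)) v = l2Z_inner u (\<lambda>n. v (n + 1))"
  unfolding l2Z_inner_def
  using infsum_reindex_bij_betw[OF bij_shift[of "-1"], of "\<lambda>n. u n * cnj (v (n + 1))"] by simp

lemma inner_self: "u \<in> l2Z \<Longrightarrow> l2Z_inner u u = complex_of_real (\<Sum>\<^sub>\<infinity>n. (cmod (u n))\<^sup>2)"
proof -
  assume u: "u \<in> l2Z"
  have "l2Z_inner u u = (\<Sum>\<^sub>\<infinity>n. complex_of_real ((cmod (u n))\<^sup>2))"
    unfolding l2Z_inner_def by (rule infsum_cong) (simp add: complex_mult_cnj cmod_power2)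
  also have "\<dots> = complex_of_real (\<Sum>\<^sub>\<infinity>n. (cmod (u n))\<^sup>2)"
    using has_sum_of_real[OF has_sum_infsum[OF u[unfolded l2Z_iff]]] infsumI by metis
  finally show ?thesis .
qed

lemma inner_jacobi_left:
  assumes "u \<in> l2Z" "x \<in> l2Z" "\<And>n. cmod (d n) \<le> B"
  shows "l2Z_inner (jacobi d u) x = l2Z_inner u (\<lambda>n. x (n + 1)) + l2Z_inner (\<lambda>n. d n * u n) x
     + l2Z_inner u (\<lambda>n. x (n - 1))"
proof -
  have "l2Z_inner (jacobi d u) x
      = l2Z_inner (\<lambda>n. 1 * u (n - 1) + 1 * (d n * u n) + 1 * u (n + 1)) x"
    by (simp add: jacobi_def[abs_def])
  then have "l2Z_inner (jacobi d u) x = l2Z_inner (\<lambda>n. u (n - 1)) x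
      + l2Z_inner (\<lambda>n. d n * u n) x + l2Z_inner (\<lambda>n. u (n + 1)) x"
    using inner3_left[OF l2Z_shift_minus[OF assms(1)] l2Z_mult_bounded[OF assms(1,3)]
        l2Z_shift[OF assms(1)] assms(2), where p = 1 and q = 1 and r = 1]
    by (simp only: mult_1)
  then show ?thesis by (simp add: inner_shift inner_shift_minus)
qed

lemma infsum_pos_elem:
  fixes f :: "int \<Rightarrow> real"
  assumes "f summable_on UNIV" "\<And>n. f n \<ge> 0" "f n0 > 0"
  shows "(\<Sum>\<^sub>\<infinity>n. f n) > 0"
proof -
  have "infsum f {n0} \<le> infsum f UNIV"
    by (rule infsum_mono_neutral) (auto simp: assms)
  then show ?thesis using assms(3) by simp
qed

subsection \<open>A planar lemma: the quadratic surface a^2 lam + a m b + |b|^2 C covers a disc\<close>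

text \<open>If z is close enough to the point lam + s1^2 (C - lam) for some s1 in [0,1), then z is of the
  form a^2 lam + a m b + |b|^2 C with a^2 + |b|^2 = 1: by the intermediate value theorem pick
  s = |b| such that z - lam - s^2 (C - lam) has length a m s, and let b point in its direction.\<close>

lemma quadratic_point_representation:
  fixes lam C z :: complex and m s1 :: real
  assumes m: "m > 0" and s1: "0 \<le> s1" "s1 < 1"
    and close: "cmod (z - lam - of_real (s1\<^sup>2) * (C - lam)) \<le> m * s1 * sqrt (1 - s1\<^sup>2)"
  shows "\<exists>a b. a\<^sup>2 + (cmod b)\<^sup>2 = 1 \<and>
           z = of_real (a\<^sup>2) * lam + of_real (a * m) * b + of_real ((cmod b)\<^sup>2) * C"
proof -
  define g where "g = (\<lambda>s. m * s * sqrt (1 - s\<^sup>2) - cmod (z - lam - of_real (s\<^sup>2) * (C - lam)))"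
  have "continuous_on {0..s1} g" unfolding g_def by (intro continuous_intros)
  moreover have "g 0 \<le> 0" "0 \<le> g s1" using close unfolding g_def by simp_all
  ultimately obtain s where s: "0 \<le> s" "s \<le> s1" "g s = 0"
    using IVT'[of g 0 0 s1] s1 by auto
  define a where "a = sqrt (1 - s\<^sup>2)"
  have "s\<^sup>2 < 1" using s s1 by (simp add: abs_square_less_1)
  then have a: "a > 0" "a\<^sup>2 = 1 - s\<^sup>2" unfolding a_def by simp_all
  define b where "b = (z - lam - of_real (s\<^sup>2) * (C - lam)) / of_real (a * m)"
  have "cmod (z - lam - of_real (s\<^sup>2) * (C - lam)) = m * s * a"
    using s(3) unfolding g_def a_def by simp
  then have bn: "cmod b = s" unfolding b_def using a m s
    by (simp add: norm_divide norm_mult abs_of_pos)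
  have amb: "of_real (a * m) * b = z - lam - of_real (s\<^sup>2) * (C - lam)"
    unfolding b_def using a m by (simp add: field_simps)
  show ?thesis
  proof (intro exI conjI)
    show "a\<^sup>2 + (cmod b)\<^sup>2 = 1" using a bn by simp
    show "z = of_real (a\<^sup>2) * lam + of_real (a * m) * b + of_real ((cmod b)\<^sup>2) * C"
      unfolding amb bn a(2) by (simp add: algebra_simps)
  qed
qed

text \<open>Consequently, for m > 0 the set of all such points contains a disc around lam
  (take s1 small compared with m and |C - lam|).\<close>

lemma quadratic_range_contains_disc:
  fixes lam C :: complex and m :: real
  assumes m: "m > 0"
  shows "\<exists>r>0. \<forall>z. cmod (z - lam) < r \<longrightarrow> (\<exists>a b. a\<^sup>2 + (cmod b)\<^sup>2 = 1 \<and>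
            z = of_real (a\<^sup>2) * lam + of_real (a * m) * b + of_real ((cmod b)\<^sup>2) * C)"
proof -
  define K where "K = cmod (C - lam)"
  define s1 where "s1 = min (1/2) (m / (4 * (K + 1)))"
  have K: "K \<ge> 0" unfolding K_def by simp
  have s1: "0 < s1" "s1 \<le> 1/2" unfolding s1_def using m K by (simp, linarith)
  have s1K: "s1 * K \<le> m / 4"
  proof -
    have "s1 \<le> m / (4 * (K + 1))" unfolding s1_def by simp
    then have "s1 * (4 * (K + 1)) \<le> m" using K by (simp add: field_simps)
    then show ?thesis using s1 by (simp add: algebra_simps)
  qed
  have sqrt_half: "1/2 \<le> sqrt (1 - s1\<^sup>2)"
  proof (rule real_le_rsqrt)
    have "s1\<^sup>2 \<le> (1/2)\<^sup>2" using s1 by (intro power_mono) auto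
    then show "(1/2)\<^sup>2 \<le> 1 - s1\<^sup>2" by (simp add: power2_eq_square)
  qed
  show ?thesis
  proof (rule exI[of _ "m * s1 / 4"], intro conjI allI impI)
    show "m * s1 / 4 > 0" using m s1 by simp
    fix z assume z: "cmod (z - lam) < m * s1 / 4"
    have "cmod (z - lam - of_real (s1\<^sup>2) * (C - lam))
        \<le> cmod (z - lam) + s1 * (s1 * K)"
      using norm_triangle_ineq4[of "z - lam" "of_real (s1\<^sup>2) * (C - lam)"]
      by (simp add: norm_mult K_def power2_eq_square)
    also have "\<dots> \<le> m * s1 * (1/2)"
    proof -
      have "s1 * (s1 * K) \<le> s1 * (m / 4)" using mult_left_mono[OF s1K] s1 by simp
      moreover have "s1 * (m / 4) = m * s1 / 4" "m * s1 * (1/2) = m * s1 / 4 + m * s1 / 4"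
        by simp_all
      ultimately show ?thesis using z by linarith
    qed
    also have "\<dots> \<le> m * s1 * sqrt (1 - s1\<^sup>2)"
      using sqrt_half m s1 by (intro mult_left_mono) auto
    finally have close: "cmod (z - lam - of_real (s1\<^sup>2) * (C - lam)) \<le> m * s1 * sqrt (1 - s1\<^sup>2)" .
    show "\<exists>a b. a\<^sup>2 + (cmod b)\<^sup>2 = 1 \<and>
        z = of_real (a\<^sup>2) * lam + of_real (a * m) * b + of_real ((cmod b)\<^sup>2) * C"
      by (rule quadratic_point_representation[OF m _ _ close]) (use s1 in auto)
  qed
qed

subsection \<open>Eigenvalues at which the defect does not vanish are interior points of Num(J)\<close>

text \<open>For an eigenpair Ju = lam u, the defect (lam - cnj lam - d + cnj d) u = 2i (Im lam - Im d) u
  measures how far u is from being an eigenvector of the real part of J.\<close>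

definition eigen_defect :: "(int \<Rightarrow> complex) \<Rightarrow> (int \<Rightarrow> complex) \<Rightarrow> complex \<Rightarrow> int \<Rightarrow> complex" where
  "eigen_defect d u lam n = (lam - cnj lam - d n + cnj (d n)) * u n"

context
  fixes d u :: "int \<Rightarrow> complex" and B :: real and lam :: complex
  assumes dB: "\<And>n. cmod (d n) \<le> B"
    and u: "u \<in> l2Z" and u_unit: "l2Z_inner u u = 1"
    and eig: "jacobi d u = (\<lambda>n. lam * u n)"
begin

private lemma du: "(\<lambda>n. d n * u n) \<in> l2Z"
  by (rule l2Z_mult_bounded[OF u dB])

private lemma cdu: "(\<lambda>n. cnj (d n) * u n) \<in> l2Z"
  by (rule l2Z_mult_bounded[OF u, of _ B]) (simp add: dB)

private lemma defect_eq:
  "eigen_defect d u lam = (\<lambda>n. (lam - cnj lam) * u n + (-1) * (d n * u n) + 1 * (cnj (d n) * u n))"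
  by (simp add: eigen_defect_def fun_eq_iff algebra_simps)

lemma eigen_defect_l2Z: "eigen_defect d u lam \<in> l2Z"
  unfolding defect_eq by (intro l2Z_add l2Z_cmult u du cdu)

text \<open>Taking the imaginary part of lam = <Ju,u>: the free part of J is symmetric, so only the
  potential contributes.\<close>

lemma eigen_imaginary_identity:
  "lam - cnj lam = l2Z_inner (\<lambda>n. d n * u n) u - l2Z_inner u (\<lambda>n. d n * u n)"
proof -
  define S where "S = l2Z_inner u (\<lambda>n. u (n + 1)) + l2Z_inner u (\<lambda>n. u (n - 1))"
  have "cnj S = S"
    unfolding S_def by (simp add: inner_cnj inner_shift inner_shift_minus)
  have "lam = l2Z_inner (jacobi d u) u"
    using eig inner_scale_left[OF u u, of lam] u_unit by simp
  also have "\<dots> = S + l2Z_inner (\<lambda>n. d n * u n) u"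
    unfolding S_def inner_jacobi_left[OF u u dB] by simp
  finally have "lam = S + l2Z_inner (\<lambda>n. d n * u n) u" .
  then show ?thesis using \<open>cnj S = S\<close> by (simp add: inner_cnj)
qed

lemma eigen_defect_orthogonal: "l2Z_inner (eigen_defect d u lam) u = 0"
proof -
  have "l2Z_inner (\<lambda>n. cnj (d n) * u n) u = l2Z_inner u (\<lambda>n. d n * u n)"
    unfolding l2Z_inner_def by (simp add: mult_ac)
  then show ?thesis
    unfolding defect_eq inner3_left[OF u du cdu u] u_unit eigen_imaginary_identity by simp
qed

text \<open>The key identity <J w, u> = <w, w> for the defect w.  It follows from the eigenvalue
  equation, written as u(n-1) + u(n+1) = lam u(n) - d(n) u(n), and orthogonality of w and u.\<close>

lemma eigen_defect_jacobi:
  defines "w \<equiv> eigen_defect d u lam"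
  shows "l2Z_inner (jacobi d w) u = l2Z_inner w w"
proof -
  have w: "w \<in> l2Z" and wu: "l2Z_inner w u = 0"
    unfolding w_def using eigen_defect_l2Z eigen_defect_orthogonal by simp_all
  define dw where "dw = (\<lambda>n. d n * w n)"
  have neighbours: "(\<lambda>n. u (n + 1) + u (n - 1)) = (\<lambda>n. lam * u n + (-1) * (d n * u n) + 0 * u n)"
    using eig by (simp add: fun_eq_iff jacobi_def algebra_simps)
  have "l2Z_inner w (\<lambda>n. u (n + 1)) + l2Z_inner w (\<lambda>n. u (n - 1))
      = l2Z_inner w (\<lambda>n. u (n + 1) + u (n - 1))"
    by (rule inner_add_right[symmetric]) (use u w in \<open>auto intro: l2Z_shift l2Z_shift_minus\<close>)
  also have "\<dots> = - l2Z_inner w (\<lambda>n. d n * u n)"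
    unfolding neighbours inner3_right[OF u du u w] using wu by simp
  finally have free: "l2Z_inner w (\<lambda>n. u (n + 1)) + l2Z_inner w (\<lambda>n. u (n - 1))
      = - l2Z_inner w (\<lambda>n. d n * u n)" .
  have "l2Z_inner w w = - l2Z_inner w (\<lambda>n. d n * u n) + l2Z_inner w (\<lambda>n. cnj (d n) * u n)"
    using inner3_right[OF u du cdu w, of "lam - cnj lam" "-1" 1] wu
    unfolding w_def defect_eq[symmetric] by simp
  also have "l2Z_inner w (\<lambda>n. cnj (d n) * u n) = l2Z_inner dw u"
    unfolding l2Z_inner_def dw_def by (simp add: mult_ac)
  finally have "l2Z_inner w w = - l2Z_inner w (\<lambda>n. d n * u n) + l2Z_inner dw u" .
  moreover have "l2Z_inner (jacobi d w) u
      = l2Z_inner w (\<lambda>n. u (n + 1)) + l2Z_inner dw u + l2Z_inner w (\<lambda>n. u (n - 1))"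
    unfolding dw_def by (rule inner_jacobi_left[OF w u dB])
  ultimately show ?thesis using free by (simp add: algebra_simps) (metis add_right_cancel)
qed

text \<open>Compression of J to the plane spanned by u and a vector w with the properties of the
  defect: the values <Jv,v> on unit vectors v = a u + (b/m) w, a real, fill the quadratic surface
  of the planar lemma, with C = <Jw,w>/m^2.\<close>

lemma compression_in_numrange:
  fixes w :: "int \<Rightarrow> complex" and m a :: real and b :: complex
  assumes w: "w \<in> l2Z" and wu: "l2Z_inner w u = 0"
    and Jw: "l2Z_inner (jacobi d w) u = l2Z_inner w w"
    and ww: "l2Z_inner w w = of_real (m\<^sup>2)" and m: "m > 0"
    and ab: "a\<^sup>2 + (cmod b)\<^sup>2 = 1"
  defines "C \<equiv> l2Z_inner (jacobi d w) w / of_real (m\<^sup>2)"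
  shows "of_real (a\<^sup>2) * lam + of_real (a * m) * b + of_real ((cmod b)\<^sup>2) * C \<in> numrange d"
proof -
  define \<alpha> where "\<alpha> = complex_of_real a"
  define \<beta> where "\<beta> = b / of_real m"
  define v where "v = (\<lambda>n. \<alpha> * u n + \<beta> * w n + 0 * u n)"
  have v: "v \<in> l2Z" unfolding v_def by (intro l2Z_add l2Z_cmult u w)
  have Jw_l2Z: "jacobi d w \<in> l2Z" by (rule jacobi_l2Z[OF w dB])
  have uw: "l2Z_inner u w = 0" by (metis inner_cnj wu complex_cnj_zero)
  have JwC: "l2Z_inner (jacobi d w) w = C * of_real (m\<^sup>2)" unfolding C_def using m by simp
  have Jv: "jacobi d v = (\<lambda>n. (\<alpha> * lam) * u n + \<beta> * jacobi d w n + 0 * u n)"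
    using eig by (simp add: fun_eq_iff jacobi_def v_def algebra_simps) (metis distrib_left)
  have uv: "l2Z_inner u v = cnj \<alpha>"
    unfolding v_def inner3_right[OF u w u u] u_unit uw by simp
  have wv: "l2Z_inner w v = cnj \<beta> * of_real (m\<^sup>2)"
    unfolding v_def inner3_right[OF u w u w] wu ww by simp
  have Jwv: "l2Z_inner (jacobi d w) v = cnj \<alpha> * of_real (m\<^sup>2) + cnj \<beta> * (C * of_real (m\<^sup>2))"
    unfolding v_def inner3_right[OF u w u Jw_l2Z] Jw ww JwC by simp
  have \<beta>\<beta>: "\<beta> * cnj \<beta> * of_real (m\<^sup>2) = of_real ((cmod b)\<^sup>2)"
    unfolding \<beta>_def using m by (simp add: complex_norm_square[symmetric] field_simps power2_eq_square)
  have \<beta>\<alpha>: "\<beta> * cnj \<alpha> * of_real (m\<^sup>2) = of_real (a * m) * b"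
    unfolding \<beta>_def \<alpha>_def using m by (simp add: power2_eq_square field_simps)
  have "l2Z_inner v v = \<alpha> * cnj \<alpha> + \<beta> * cnj \<beta> * of_real (m\<^sup>2)"
    using inner3_left[OF u w u v, of \<alpha> \<beta> 0] uv wv by (simp add: v_def mult.assoc)
  also have "\<dots> = 1"
    unfolding \<beta>\<beta> \<alpha>_def using ab by (simp flip: of_real_mult of_real_add add: power2_eq_square)
  finally have norm_v: "l2Z_norm v = 1"
    using inner_self[OF v] unfolding l2Z_norm_def by (metis of_real_eq_1_iff real_sqrt_one)
  have "l2Z_inner (jacobi d v) v
      = \<alpha> * lam * cnj \<alpha> + \<beta> * cnj \<alpha> * of_real (m\<^sup>2) + \<beta> * cnj \<beta> * (C * of_real (m\<^sup>2))"
    unfolding Jv inner3_left[OF u Jw_l2Z u v] uv Jwv by (simp add: algebra_simps)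
  also have "\<dots> = of_real (a\<^sup>2) * lam + \<beta> * cnj \<alpha> * of_real (m\<^sup>2) + \<beta> * cnj \<beta> * of_real (m\<^sup>2) * C"
    unfolding \<alpha>_def by (simp add: power2_eq_square mult_ac)
  also have "\<dots> = of_real (a\<^sup>2) * lam + of_real (a * m) * b + of_real ((cmod b)\<^sup>2) * C"
    unfolding \<beta>\<alpha> \<beta>\<beta> ..
  finally show ?thesis unfolding numrange_def using v norm_v by (intro CollectI exI[of _ v]) simp
qed

lemma eigenvalue_interior_if_defect:
  assumes defect: "eigen_defect d u lam n0 \<noteq> 0"
  shows "lam \<in> interior (numrange d)"
proof -
  define w where "w = eigen_defect d u lam"
  have w: "w \<in> l2Z" unfolding w_def by (rule eigen_defect_l2Z)
  define m where "m = sqrt (\<Sum>\<^sub>\<infinity>n. (cmod (w n))\<^sup>2)"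
  have "(\<Sum>\<^sub>\<infinity>n. (cmod (w n))\<^sup>2) > 0"
    by (rule infsum_pos_elem[of _ n0]) (use w defect in \<open>auto simp: l2Z_iff w_def\<close>)
  then have m: "m > 0" and ww: "l2Z_inner w w = of_real (m\<^sup>2)"
    unfolding m_def using inner_self[OF w] by simp_all
  obtain r where r: "r > 0" and disc: "\<And>z. cmod (z - lam) < r \<Longrightarrow> \<exists>a b. a\<^sup>2 + (cmod b)\<^sup>2 = 1 \<and>
      z = of_real (a\<^sup>2) * lam + of_real (a * m) * b
        + of_real ((cmod b)\<^sup>2) * (l2Z_inner (jacobi d w) w / of_real (m\<^sup>2))"
    using quadratic_range_contains_disc[OF m] by blast
  have "ball lam r \<subseteq> numrange d"
  proof
    fix z assume "z \<in> ball lam r"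
    then have "cmod (z - lam) < r" by (simp add: dist_norm norm_minus_commute)
    then obtain a b where "a\<^sup>2 + (cmod b)\<^sup>2 = 1" and z: "z = of_real (a\<^sup>2) * lam + of_real (a * m) * b
        + of_real ((cmod b)\<^sup>2) * (l2Z_inner (jacobi d w) w / of_real (m\<^sup>2))"
      using disc by blast
    then show "z \<in> numrange d"
      unfolding z w_def
      by (intro compression_in_numrange eigen_defect_l2Z eigen_defect_orthogonal eigen_defect_jacobi m)
        (use ww in \<open>simp_all add: w_def\<close>)
  qed
  then show ?thesis unfolding mem_interior using r by blast
qed

end

subsection \<open>Half-line recurrences: the case |r| < 2\<close>

text \<open>For the recurrence w(j) + w(j+2) = (r - W(j+1)) w(j+1) with |r| < 2, the quadratic form
  below is a conserved energy when W = 0 and is positive definite.  Summable W can only change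
  it by a convergent product, so a decaying solution must have zero energy.\<close>

definition recurrence_energy :: "real \<Rightarrow> real \<Rightarrow> real \<Rightarrow> real" where
  "recurrence_energy r a b = a\<^sup>2 + b\<^sup>2 - r * a * b"

lemma recurrence_energy_coercive:
  "(1 - \<bar>r\<bar> / 2) * (a\<^sup>2 + b\<^sup>2) \<le> recurrence_energy r a b"
proof -
  have "2 * \<bar>a\<bar> * \<bar>b\<bar> \<le> \<bar>a\<bar>\<^sup>2 + \<bar>b\<bar>\<^sup>2" by (rule sum_squares_bound)
  then have "\<bar>a * b\<bar> \<le> (a\<^sup>2 + b\<^sup>2) / 2" by (simp add: abs_mult)
  then have "\<bar>r\<bar> * \<bar>a * b\<bar> \<le> \<bar>r\<bar> * ((a\<^sup>2 + b\<^sup>2) / 2)" by (intro mult_left_mono) auto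
  moreover have "r * a * b \<le> \<bar>r\<bar> * \<bar>a * b\<bar>" by (metis abs_ge_self abs_mult mult.assoc)
  ultimately show ?thesis unfolding recurrence_energy_def by (simp add: algebra_simps)
qed

lemma recurrence_energy_step:
  assumes r: "\<bar>r\<bar> < 2" and V: "\<bar>V\<bar> \<le> 1"
  shows "(1 - 4 / (1 - \<bar>r\<bar> / 2) * \<bar>V\<bar>) * recurrence_energy r a b
         \<le> recurrence_energy r b ((r - V) * b - a)"
proof -
  define c where "c = 1 - \<bar>r\<bar> / 2"
  have c: "c > 0" unfolding c_def using r by simp
  have ident: "recurrence_energy r b ((r - V) * b - a) - recurrence_energy r a b
      = V * (2 * (a * b) + (V - r) * b\<^sup>2)"
    unfolding recurrence_energy_def by (simp add: algebra_simps power2_eq_square)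
  have "2 * \<bar>a * b\<bar> \<le> a\<^sup>2 + b\<^sup>2"
    using sum_squares_bound[of "\<bar>a\<bar>" "\<bar>b\<bar>"] by (simp add: abs_mult)
  moreover have "\<bar>V - r\<bar> * b\<^sup>2 \<le> 3 * b\<^sup>2" using V r by (intro mult_right_mono) auto
  moreover have "\<bar>2 * (a * b) + (V - r) * b\<^sup>2\<bar> \<le> 2 * \<bar>a * b\<bar> + \<bar>V - r\<bar> * b\<^sup>2"
    using abs_triangle_ineq[of "2 * (a * b)" "(V - r) * b\<^sup>2"] by (simp add: abs_mult)
  ultimately have "\<bar>2 * (a * b) + (V - r) * b\<^sup>2\<bar> \<le> 4 * (a\<^sup>2 + b\<^sup>2)"
    by (smt (verit) zero_le_power2)
  also have "\<dots> \<le> 4 / c * recurrence_energy r a b"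
    using recurrence_energy_coercive[of r a b] c unfolding c_def[symmetric]
    by (simp add: field_simps)
  finally have "\<bar>V * (2 * (a * b) + (V - r) * b\<^sup>2)\<bar> \<le> \<bar>V\<bar> * (4 / c * recurrence_energy r a b)"
    unfolding abs_mult by (intro mult_left_mono) auto
  then show ?thesis using ident unfolding c_def by (simp add: algebra_simps abs_le_iff)
qed

lemma exp_le_one_minus: "0 \<le> x \<Longrightarrow> x \<le> 1/2 \<Longrightarrow> exp (-2 * x) \<le> 1 - (x::real)"
proof -
  assume x: "0 \<le> x" "x \<le> 1/2"
  have "x * x \<le> x * (1/2)" using x by (intro mult_left_mono) auto
  then have p: "1 \<le> (1 - x) * (1 + 2 * x)" by (simp add: algebra_simps)
  have "exp (-2 * x) = 1 / exp (2 * x)" by (simp add: exp_minus field_simps)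
  also have "\<dots> \<le> 1 / (1 + 2 * x)"
    using exp_ge_add_one_self[of "2 * x"] x by (intro divide_left_mono) auto
  also have "\<dots> \<le> 1 - x" using p x by (simp add: divide_le_eq)
  finally show ?thesis .
qed

lemma product_lower_bound:
  fixes E x :: "nat \<Rightarrow> real"
  assumes step: "\<And>k. (1 - x k) * E k \<le> E (Suc k)"
    and x: "\<And>k. 0 \<le> x k" "\<And>k. x k \<le> 1/2" and E: "\<And>k. 0 \<le> E k"
  shows "E 0 * exp (-2 * (\<Sum>i<k. x i)) \<le> E k"
proof (induction k)
  case 0 then show ?case by simp
next
  case (Suc k)
  have "E 0 * exp (-2 * (\<Sum>i<Suc k. x i)) = exp (-2 * x k) * (E 0 * exp (-2 * (\<Sum>i<k. x i)))"
    by (simp add: algebra_simps exp_add[symmetric])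
  also have "\<dots> \<le> exp (-2 * x k) * E k" using Suc by (intro mult_left_mono) auto
  also have "\<dots> \<le> (1 - x k) * E k"
    using exp_le_one_minus[OF x] E by (intro mult_right_mono) auto
  also have "\<dots> \<le> E (Suc k)" by (rule step)
  finally show ?case .
qed

lemma shrinking_sequence_vanishes:
  fixes E x :: "nat \<Rightarrow> real"
  assumes step: "\<And>k. (1 - x k) * E k \<le> E (Suc k)"
    and x: "\<And>k. 0 \<le> x k" "\<And>k. x k \<le> 1/2" and E: "\<And>k. 0 \<le> E k"
    and sx: "summable x" and E0: "E \<longlonglongrightarrow> 0"
  shows "E 0 = 0"
proof -
  have "E 0 * exp (-2 * suminf x) \<le> E k" for k
  proof -
    have "(\<Sum>i<k. x i) \<le> suminf x" by (rule sum_le_suminf[OF sx]) (use x in auto)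
    then have "E 0 * exp (-2 * suminf x) \<le> E 0 * exp (-2 * (\<Sum>i<k. x i))"
      using E by (intro mult_left_mono) auto
    also have "\<dots> \<le> E k" by (rule product_lower_bound[where x = x and E = E, OF step x E])
    finally show ?thesis .
  qed
  then have "E 0 * exp (-2 * suminf x) \<le> 0" by (intro LIMSEQ_le_const[OF E0]) auto
  then show ?thesis using E[of 0] by (simp add: mult_le_0_iff)
qed

text \<open>Case |r| < 2: far out the energy of a decaying solution shrinks by summable factors, so it
  vanishes, i.e. two consecutive values vanish.\<close>

lemma recurrence_inside:
  fixes w W :: "nat \<Rightarrow> real"
  assumes rec: "\<And>j. w j + w (j + 2) = (r - W (j + 1)) * w (j + 1)"
    and r: "\<bar>r\<bar> < 2" and w0: "w \<longlonglongrightarrow> 0" and sW: "summable (\<lambda>j. \<bar>W j\<bar>)"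
  shows "\<exists>j. w j = 0 \<and> w (Suc j) = 0"
proof -
  define c where "c = 1 - \<bar>r\<bar> / 2"
  define K where "K = 4 / c"
  define E where "E = (\<lambda>j. recurrence_energy r (w j) (w (Suc j)))"
  have c: "c > 0" and K: "K > 0" unfolding K_def c_def using r by simp_all
  have E_coercive: "c * ((w j)\<^sup>2 + (w (Suc j))\<^sup>2) \<le> E j" for j
    unfolding E_def c_def by (rule recurrence_energy_coercive)
  have E_nonneg: "0 \<le> E j" for j
    using E_coercive[of j] c by (smt (verit) mult_nonneg_nonneg zero_le_power2)
  have "\<forall>\<^sub>F j in sequentially. \<bar>W j\<bar> < min 1 (1 / (2 * K))"
    using K by (intro order_tendstoD(2)[OF summable_LIMSEQ_zero[OF sW]]) simp
  then obtain N where N: "\<And>j. j \<ge> N \<Longrightarrow> \<bar>W j\<bar> < min 1 (1 / (2 * K))"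
    by (auto simp: eventually_sequentially)
  have small: "0 \<le> K * \<bar>W (N + 1 + k)\<bar>" "K * \<bar>W (N + 1 + k)\<bar> \<le> 1/2" for k
    using N[of "N + 1 + k"] K by (auto simp: field_simps)
  have step: "(1 - K * \<bar>W (N + 1 + k)\<bar>) * E (N + k) \<le> E (N + Suc k)" for k
  proof -
    have "\<bar>W (Suc (N + k))\<bar> \<le> 1" using N[of "Suc (N + k)"] by simp
    moreover have "w (Suc (Suc (N + k))) = (r - W (Suc (N + k))) * w (Suc (N + k)) - w (N + k)"
      using rec[of "N + k"] by (simp add: eval_nat_numeral)
    ultimately show ?thesis
      using recurrence_energy_step[OF r, of "W (Suc (N + k))" "w (N + k)" "w (Suc (N + k))"]
      unfolding E_def K_def c_def by simp
  qed
  have "summable (\<lambda>k. K * \<bar>W (N + 1 + k)\<bar>)"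
    using summable_mult[OF summable_ignore_initial_segment[OF sW, of "N + 1"], of K]
    by (simp add: add.commute)
  moreover have "E \<longlonglongrightarrow> 0"
    unfolding E_def recurrence_energy_def using w0 LIMSEQ_Suc[OF w0] by (auto intro!: tendsto_eq_intros)
  then have "(\<lambda>k. E (N + k)) \<longlonglongrightarrow> 0"
    using LIMSEQ_ignore_initial_segment[of E 0 N] by (simp add: add.commute)
  ultimately have "E N = 0"
    using shrinking_sequence_vanishes[where E = "\<lambda>k. E (N + k)", OF step small E_nonneg] by simp
  then have "c * ((w N)\<^sup>2 + (w (Suc N))\<^sup>2) \<le> 0" using E_coercive[of N] by simp
  then show ?thesis using c
    by (intro exI[of _ N]) (smt (verit) mult_pos_pos zero_le_power2 power_eq_0_iff zero_less_power2)
qed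

subsection \<open>Half-line recurrences: the case r > 2\<close>

lemma recurrence_growth:
  fixes w W :: "nat \<Rightarrow> real"
  assumes rec: "\<And>j. w j + w (j + 2) = (r - W (j + 1)) * w (j + 1)"
    and coeff: "\<And>i. i > j \<Longrightarrow> r - W i \<ge> 2" and zero: "w j = 0"
  shows "w (Suc j) * w (Suc j) \<le> w (Suc j) * w (j + Suc k)"
proof -
  define p where "p = (\<lambda>k. w (Suc j) * w (j + k))"
  have "p k \<le> p (Suc k) \<and> p 1 \<le> p (Suc k)" for k
  proof (induction k)
    case 0 then show ?case using zero by (simp add: p_def)
  next
    case (Suc k)
    have p_rec: "p (Suc (Suc k)) = (r - W (j + k + 1)) * p (Suc k) - p k"
      using arg_cong[OF rec[of "j + k"], of "\<lambda>x. w (Suc j) * x"]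
      by (simp add: p_def algebra_simps eval_nat_numeral)
    have "0 \<le> p 1" by (simp add: p_def)
    then have "0 \<le> p (Suc k)" using Suc by linarith
    then have "2 * p (Suc k) \<le> (r - W (j + k + 1)) * p (Suc k)"
      using coeff[of "j + k + 1"] by (intro mult_right_mono) auto
    then show ?case using Suc p_rec by linarith
  qed
  then show ?thesis by (simp add: p_def)
qed

text \<open>Case r > 2: far out the coefficients exceed 2, so a zero followed by a nonzero value would
  force growth, contradicting decay.\<close>

lemma recurrence_outside:
  fixes w W :: "nat \<Rightarrow> real"
  assumes rec: "\<And>j. w j + w (j + 2) = (r - W (j + 1)) * w (j + 1)"
    and r: "r > 2" and W0: "W \<longlonglongrightarrow> 0" and w0: "w \<longlonglongrightarrow> 0"
    and zeros: "\<And>J. \<exists>j\<ge>J. w j = 0"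
  shows "\<exists>j. w j = 0 \<and> w (Suc j) = 0"
proof -
  have "\<forall>\<^sub>F j in sequentially. \<bar>W j\<bar> < r - 2"
    using r by (intro order_tendstoD(2)[OF tendsto_rabs_zero[OF W0]]) auto
  then obtain J where J: "\<And>j. j \<ge> J \<Longrightarrow> \<bar>W j\<bar> < r - 2" by (auto simp: eventually_sequentially)
  obtain j where j: "j \<ge> J" "w j = 0" using zeros by blast
  have coeff: "r - W i \<ge> 2" if "i > j" for i
  proof -
    have "\<bar>W i\<bar> < r - 2" using J[of i] j(1) that by simp
    then show ?thesis by linarith
  qed
  define c where "c = w (Suc j)"
  have growth: "c * c \<le> c * w (j + Suc k)" for k
    unfolding c_def by (rule recurrence_growth[OF rec coeff j(2)])
  have "(\<lambda>k. c * w (j + Suc k)) \<longlonglongrightarrow> c * 0"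
    using LIMSEQ_ignore_initial_segment[OF w0, of "Suc j"]
    by (intro tendsto_mult_left) (simp add: add.commute)
  then have "c * c \<le> 0" using growth by (intro LIMSEQ_le_const) auto
  then have "c = 0" by (auto simp: mult_le_0_iff)
  then show ?thesis using j(2) unfolding c_def by blast
qed

subsection \<open>Half-line recurrences: the critical case r = 2\<close>

text \<open>Summing the recurrence twice (discrete variation of constants) expresses w(p) through a
  far value w(p+k), a far difference quotient, and W-weighted sums of w.\<close>

lemma variation_of_constants:
  fixes w W :: "nat \<Rightarrow> real"
  assumes rec: "\<And>j. w j + w (j + 2) = (2 - W (j + 1)) * w (j + 1)"
  shows "w p = w (p + k) - real k * (w (Suc (p + k + l)) - w (p + k + l))
      - real k * (\<Sum>i<l. W (p + k + 1 + i) * w (p + k + 1 + i))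
      - (\<Sum>i<k. real (i + 1) * W (p + 1 + i) * w (p + 1 + i))"
proof -
  define D where "D = (\<lambda>j. w (Suc j) - w j)"
  have D_step: "D (Suc j) = D j - W (Suc j) * w (Suc j)" for j
    using rec[of j] by (simp add: D_def algebra_simps eval_nat_numeral)
  have D_sum: "D q = D (q + l) + (\<Sum>i<l. W (q + 1 + i) * w (q + 1 + i))" for q
    by (induction l) (simp_all add: D_step)
  have w_sum: "w p = w (p + k) - real k * D (p + k)
      - (\<Sum>i<k. real (i + 1) * W (p + 1 + i) * w (p + 1 + i))"
  proof (induction k)
    case 0 then show ?case by simp
  next
    case (Suc k)
    have e1: "w (p + Suc k) = w (p + k) + D (p + k)" by (simp add: D_def)
    have e2: "D (p + Suc k) = D (p + k) - W (p + 1 + k) * w (p + 1 + k)"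
      using D_step[of "p + k"] by simp
    show ?case unfolding e1 e2 using Suc by (simp add: algebra_simps)
  qed
  show ?thesis using w_sum unfolding D_sum[of "p + k"] by (simp add: D_def algebra_simps)
qed

lemma weighted_sum_bound:
  fixes w W c :: "nat \<Rightarrow> real"
  assumes c: "\<And>i. i < k \<Longrightarrow> 0 \<le> c i \<and> c i \<le> real (q + i)"
    and w: "\<And>i. i < k \<Longrightarrow> \<bar>w (q + i)\<bar> \<le> M"
  shows "\<bar>\<Sum>i<k. c i * W (q + i) * w (q + i)\<bar> \<le> M * (\<Sum>i<k. real (q + i) * \<bar>W (q + i)\<bar>)"
proof -
  have "\<bar>\<Sum>i<k. c i * W (q + i) * w (q + i)\<bar> \<le> (\<Sum>i<k. \<bar>c i * W (q + i) * w (q + i)\<bar>)"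
    by (rule sum_abs)
  also have "\<dots> \<le> (\<Sum>i<k. M * (real (q + i) * \<bar>W (q + i)\<bar>))"
  proof (rule sum_mono)
    fix i assume "i \<in> {..<k}"
    then have ci: "\<bar>c i\<bar> \<le> real (q + i)" and wi: "\<bar>w (q + i)\<bar> \<le> M"
      using c[of i] w[of i] by auto
    have "(\<bar>c i\<bar> * \<bar>W (q + i)\<bar>) * \<bar>w (q + i)\<bar> \<le> (real (q + i) * \<bar>W (q + i)\<bar>) * M"
      by (intro mult_mono mult_right_mono ci wi) auto
    then show "\<bar>c i * W (q + i) * w (q + i)\<bar> \<le> M * (real (q + i) * \<bar>W (q + i)\<bar>)"
      by (simp add: abs_mult mult_ac)
  qed
  finally show ?thesis by (simp add: sum_distrib_left)
qed

text \<open>Once the first-moment tail of W is at most 1/2, any bound M for a decaying solution beyond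
  N improves to M/2: in the variation-of-constants formula the far terms tend to zero.\<close>

lemma tail_halving:
  fixes w W :: "nat \<Rightarrow> real"
  assumes rec: "\<And>j. w j + w (j + 2) = (2 - W (j + 1)) * w (j + 1)"
    and w0: "w \<longlonglongrightarrow> 0" and bound: "\<And>m. m \<ge> N \<Longrightarrow> \<bar>w m\<bar> \<le> M"
    and tail: "\<And>q n. q > N \<Longrightarrow> (\<Sum>i<n. real (q + i) * \<bar>W (q + i)\<bar>) \<le> 1/2"
    and p: "p \<ge> N"
  shows "\<bar>w p\<bar> \<le> M / 2"
proof (rule field_le_epsilon)
  fix e :: real assume e: "e > 0"
  have M: "M \<ge> 0" using bound[of N] by simp
  define G where "G = (\<lambda>q n. \<Sum>i<n. real (q + i) * \<bar>W (q + i)\<bar>)"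
  have "\<forall>\<^sub>F j in sequentially. \<bar>w j\<bar> < e / 2"
    using e by (intro order_tendstoD(2)[OF tendsto_rabs_zero[OF w0]]) simp
  then obtain k where k: "\<bar>w (p + k)\<bar> < e / 2"
    by (auto simp: eventually_sequentially) (metis le_add2)
  have "(\<lambda>j. real k * (w (Suc j) - w j)) \<longlonglongrightarrow> real k * (0 - 0)"
    by (intro tendsto_intros LIMSEQ_Suc w0)
  then have "\<forall>\<^sub>F j in sequentially. \<bar>real k * (w (Suc j) - w j)\<bar> < e / 2"
    using e by (intro order_tendstoD(2)[OF tendsto_rabs_zero]) simp_all
  then obtain l where l: "\<bar>real k * (w (Suc (p + k + l)) - w (p + k + l))\<bar> < e / 2"
    by (auto simp: eventually_sequentially) (metis le_add2)
  have far: "\<bar>real k * (\<Sum>i<l. W (p + k + 1 + i) * w (p + k + 1 + i))\<bar> \<le> M * G (p + 1 + k) l"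
    using weighted_sum_bound[of l "\<lambda>_. real k" "p + 1 + k" w M W] bound p
    by (simp add: G_def sum_distrib_left mult.assoc ac_simps)
  have near: "\<bar>\<Sum>i<k. real (i + 1) * W (p + 1 + i) * w (p + 1 + i)\<bar> \<le> M * G (p + 1) k"
    using weighted_sum_bound[of k "\<lambda>i. real (i + 1)" "p + 1" w M W] bound p
    by (simp add: G_def ac_simps)
  have "G (p + 1) k + G (p + 1 + k) l = G (p + 1) (k + l)"
    unfolding G_def by (induction l) (simp_all add: ac_simps)
  also have "\<dots> \<le> 1/2" unfolding G_def using p by (intro tail) simp
  finally have "M * (G (p + 1) k + G (p + 1 + k) l) \<le> M * (1/2)"
    by (rule mult_left_mono[OF _ M])
  then show "\<bar>w p\<bar> \<le> M / 2 + e"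
    using variation_of_constants[OF rec, of p k l] k l far near
    by (simp add: distrib_left)
qed

text \<open>Case r = 2: iterating the halving bound shows that a decaying solution vanishes far out.\<close>

lemma recurrence_at_two:
  fixes w W :: "nat \<Rightarrow> real"
  assumes rec: "\<And>j. w j + w (j + 2) = (2 - W (j + 1)) * w (j + 1)"
    and w0: "w \<longlonglongrightarrow> 0" and moment: "summable (\<lambda>j. real j * \<bar>W j\<bar>)"
  shows "\<exists>j. w j = 0 \<and> w (Suc j) = 0"
proof -
  obtain N where N: "\<And>n. n \<ge> N \<Longrightarrow> norm (\<Sum>i. real (i + n) * \<bar>W (i + n)\<bar>) < 1/2"
    using suminf_exist_split[OF _ moment, of "1/2"] by auto
  have tail: "(\<Sum>i<n. real (q + i) * \<bar>W (q + i)\<bar>) \<le> 1/2" if "q > N" for q n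
  proof -
    have "(\<Sum>i<n. real (i + q) * \<bar>W (i + q)\<bar>) \<le> (\<Sum>i. real (i + q) * \<bar>W (i + q)\<bar>)"
      by (rule sum_le_suminf) (use summable_ignore_initial_segment[OF moment, of q] in auto)
    also have "\<dots> < 1/2" using N[of q] that by simp
    finally show ?thesis by (simp add: add.commute)
  qed
  obtain B where B: "\<And>j. \<bar>w j\<bar> \<le> B"
    using convergent_imp_Bseq[of w] w0 by (auto simp: convergent_def Bseq_def)
  have halved: "\<forall>p\<ge>N. \<bar>w p\<bar> \<le> B / 2 ^ n" for n
  proof (induction n)
    case 0 then show ?case using B by simp
  next
    case (Suc n)
    then show ?case
      using tail_halving[OF rec w0, of N "B / 2 ^ n"] tail by (simp add: mult.commute)
  qed
  have "w p = 0" if "p \<ge> N" for p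
  proof -
    have "\<bar>w p\<bar> \<le> 0"
      using halved that by (intro LIMSEQ_le_const[OF LIMSEQ_divide_realpow_zero[of 2 B]]) auto
    then show ?thesis by simp
  qed
  then show ?thesis by (intro exI[of _ N]) simp
qed

lemma recurrence_at_least_two:
  fixes w W :: "nat \<Rightarrow> real"
  assumes rec: "\<And>j. w j + w (j + 2) = (r - W (j + 1)) * w (j + 1)"
    and r: "r \<ge> 2" and w0: "w \<longlonglongrightarrow> 0" and moment: "summable (\<lambda>j. real j * \<bar>W j\<bar>)"
    and W0: "W \<longlonglongrightarrow> 0" and zeros: "\<And>J. \<exists>j\<ge>J. w j = 0"
  shows "\<exists>j. w j = 0 \<and> w (Suc j) = 0"
proof (cases "r = 2")
  case True
  then show ?thesis using recurrence_at_two[of w W] rec w0 moment by blast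
next
  case False
  then show ?thesis using recurrence_outside[of w r W] rec r W0 w0 zeros by fastforce
qed

text \<open>For r \<le> -2
  the substitution w(j) \<mapsto> (-1)^j w(j) reduces to r \<ge> 2.\<close>

lemma recurrence_consecutive_zeros:
  fixes w W :: "nat \<Rightarrow> real"
  assumes rec: "\<And>j. w j + w (j + 2) = (r - W (j + 1)) * w (j + 1)"
    and w0: "w \<longlonglongrightarrow> 0" and moment: "summable (\<lambda>j. real j * \<bar>W j\<bar>)"
    and zeros: "\<And>J. \<exists>j\<ge>J. w j = 0"
  shows "\<exists>j. w j = 0 \<and> w (Suc j) = 0"
proof -
  have sW: "summable (\<lambda>j. \<bar>W j\<bar>)"
    by (rule summable_comparison_test'[OF moment, of 1])
      (use mult_right_mono[of 1 _ "\<bar>W _\<bar>"] in auto)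
  have W0: "W \<longlonglongrightarrow> 0" using summable_LIMSEQ_zero[OF sW] by (simp add: tendsto_rabs_zero_iff)
  consider "\<bar>r\<bar> < 2" | "r \<ge> 2" | "r \<le> -2" by linarith
  then show ?thesis
  proof cases
    case 1 then show ?thesis using recurrence_inside[OF rec _ w0 sW] by blast
  next
    case 2 then show ?thesis using recurrence_at_least_two[OF rec _ w0 moment W0 zeros] by blast
  next
    case 3
    define w' where "w' = (\<lambda>j. (-1::real) ^ j * w j)"
    have rec': "w' j + w' (j + 2) = (- r - (- W (j + 1))) * w' (j + 1)" for j
      using arg_cong[OF rec[of j], of "\<lambda>x. (-1::real) ^ j * x"]
      by (simp add: w'_def power_add algebra_simps)
    have "(\<lambda>j. \<bar>w' j\<bar>) = (\<lambda>j. \<bar>w j\<bar>)" by (simp add: w'_def abs_mult)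
    then have "w' \<longlonglongrightarrow> 0" using w0 by (metis tendsto_rabs_zero_iff)
    moreover have "\<exists>j\<ge>J. w' j = 0" for J using zeros[of J] by (auto simp: w'_def)
    ultimately obtain j where "w' j = 0" "w' (Suc j) = 0"
      using recurrence_at_least_two[of w' "- r" "\<lambda>j. - W j", OF rec'] 3 moment
        tendsto_minus[OF W0] by auto
    then show ?thesis by (auto simp: w'_def)
  qed
qed

subsection \<open>Two-sided recurrences\<close>

lemma recurrence_unique_continuation:
  fixes y c :: "int \<Rightarrow> 'a::comm_ring_1"
  assumes rec: "\<And>n. y (n - 1) + y (n + 1) = c n * y n"
    and zero: "y m = 0" "y (m + 1) = 0"
  shows "y n = 0"
proof -
  have forward: "y (m + int k) = 0 \<and> y (m + int k + 1) = 0" for k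
  proof (induction k)
    case (Suc k)
    then show ?case using rec[of "m + int k + 1"] by (simp add: algebra_simps)
  qed (use zero in simp)
  have backward: "y (m - int k) = 0 \<and> y (m - int k + 1) = 0" for k
  proof (induction k)
    case (Suc k)
    then show ?case using rec[of "m - int k"] by (simp add: algebra_simps)
  qed (use zero in simp)
  show ?thesis
  proof (cases "n \<ge> m")
    case True
    then show ?thesis using forward[of "nat (n - m)"] by simp
  next
    case False
    then show ?thesis using backward[of "nat (m - n)"] by simp
  qed
qed

lemma infinite_int_set_unbounded:
  fixes A :: "int set"
  assumes "infinite A"
  obtains s where "s = 1 \<or> s = -1" "\<And>J. \<exists>j\<ge>J. s * int j \<in> A"
proof -
  have "\<exists>s. (s = 1 \<or> s = -1) \<and> (\<forall>J. \<exists>j\<ge>J. s * int j \<in> A)"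
  proof (rule ccontr)
    assume "\<not> ?thesis"
    then obtain J1 J2 where J1: "\<And>j. j \<ge> J1 \<Longrightarrow> int j \<notin> A" and J2: "\<And>j. j \<ge> J2 \<Longrightarrow> - int j \<notin> A"
      by (metis mult_1 mult_minus1)
    have "A \<subseteq> {- int J2..int J1}"
    proof
      fix n assume n: "n \<in> A"
      show "n \<in> {- int J2..int J1}"
      proof (cases "n \<ge> 0")
        case True
        then have "\<not> J1 \<le> nat n" using J1[of "nat n"] n by auto
        then show ?thesis using True by auto
      next
        case False
        then have "\<not> J2 \<le> nat (- n)" using J2[of "nat (- n)"] n by auto
        then show ?thesis using False by auto
      qed
    qed
    then show False using assms finite_subset by blast
  qed
  then show ?thesis using that by blast
qed

lemma half_line_restriction:
  fixes y V :: "int \<Rightarrow> real" and s :: int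
  assumes s: "s = 1 \<or> s = -1"
    and l2: "(\<lambda>n. (y n)\<^sup>2) summable_on UNIV"
    and moment: "(\<lambda>k. \<bar>real_of_int k\<bar> * \<bar>V k\<bar>) summable_on UNIV"
  shows "(\<lambda>j. y (s * int j)) \<longlonglongrightarrow> 0" and "summable (\<lambda>j. real j * \<bar>V (s * int j)\<bar>)"
proof -
  have inj: "inj (\<lambda>j::nat. s * int j)" using s by (auto simp: inj_on_def)
  have restrict: "(\<lambda>j. g (s * int j)) summable_on UNIV" if "g summable_on UNIV" for g :: "int \<Rightarrow> real"
    using summable_on_reindex[OF inj, of g] summable_on_subset_banach[OF that]
    by (auto simp: o_def)
  have "summable (\<lambda>j. (y (s * int j))\<^sup>2)"
    using restrict[OF l2] summable_on_UNIV_nonneg_real_iff by auto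
  then have "(\<lambda>j. sqrt ((y (s * int j))\<^sup>2)) \<longlonglongrightarrow> sqrt 0"
    by (intro tendsto_real_sqrt summable_LIMSEQ_zero)
  then show "(\<lambda>j. y (s * int j)) \<longlonglongrightarrow> 0" by (simp add: tendsto_rabs_zero_iff)
  have "(\<lambda>j. \<bar>real_of_int (s * int j)\<bar> * \<bar>V (s * int j)\<bar>) summable_on UNIV"
    using restrict[OF moment] .
  then show "summable (\<lambda>j. real j * \<bar>V (s * int j)\<bar>)"
    using s by (subst summable_on_UNIV_nonneg_real_iff[symmetric]) (auto simp: abs_mult)
qed

lemma consecutive_zeros_along_direction:
  fixes y V :: "int \<Rightarrow> real" and s :: int
  assumes s: "s = 1 \<or> s = -1"
    and rec: "\<And>n. y (n - 1) + y (n + 1) = (r - V n) * y n"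
    and l2: "(\<lambda>n. (y n)\<^sup>2) summable_on UNIV"
    and moment: "(\<lambda>k. \<bar>real_of_int k\<bar> * \<bar>V k\<bar>) summable_on UNIV"
    and zeros: "\<And>J. \<exists>j\<ge>J. y (s * int j) = 0"
  shows "\<exists>m. y m = 0 \<and> y (m + 1) = 0"
proof -
  have "y (s * int j) + y (s * int (j + 2)) = (r - V (s * int (j + 1))) * y (s * int (j + 1))" for j
    using rec[of "s * int (j + 1)"] s by (auto simp: algebra_simps)
  then obtain j where j: "y (s * int j) = 0" "y (s * int (Suc j)) = 0"
    using recurrence_consecutive_zeros[of "\<lambda>j. y (s * int j)" r "\<lambda>j. V (s * int j)"]
      half_line_restriction[OF s l2 moment] zeros by blast
  show ?thesis
  proof (cases "s = 1")
    case True then show ?thesis using j by (intro exI[of _ "int j"]) (simp add: add.commute)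
  next
    case False then show ?thesis using j s by (intro exI[of _ "- 1 - int j"]) simp
  qed
qed

lemma real_solution_vanishes:
  fixes y V :: "int \<Rightarrow> real"
  assumes rec: "\<And>n. y (n - 1) + y (n + 1) = (r - V n) * y n"
    and l2: "(\<lambda>n. (y n)\<^sup>2) summable_on UNIV"
    and moment: "(\<lambda>k. \<bar>real_of_int k\<bar> * \<bar>V k\<bar>) summable_on UNIV"
    and zeros: "infinite {n. y n = 0}"
  shows "y n = 0"
proof -
  obtain s where "s = 1 \<or> s = -1" "\<And>J. \<exists>j\<ge>J. y (s * int j) = 0"
    using infinite_int_set_unbounded[OF zeros] by auto
  then obtain m where "y m = 0" "y (m + 1) = 0"
    using consecutive_zeros_along_direction[OF _ rec l2 moment] by blast
  then show ?thesis by (rule recurrence_unique_continuation[OF rec])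
qed

subsection \<open>Eigenvectors for boundary eigenvalues\<close>

lemma bounded_if_tendsto_cofinite:
  fixes d :: "'a \<Rightarrow> 'b::real_normed_vector"
  assumes "(d \<longlongrightarrow> 0) cofinite"
  obtains B where "\<And>n. norm (d n) \<le> B"
proof -
  have "eventually (\<lambda>n. norm (d n) < 1) cofinite"
    by (rule order_tendstoD(2)[OF tendsto_norm_zero[OF assms]]) simp
  then have F: "finite {n. \<not> norm (d n) < 1}" by (simp add: eventually_cofinite)
  have "norm (d n) \<le> 1 + (\<Sum>k\<in>{n. \<not> norm (d n) < 1}. norm (d k))" for n
  proof (cases "norm (d n) < 1")
    case True then show ?thesis by (simp add: sum_nonneg add_increasing2)
  next
    case False then show ?thesis using member_le_sum[OF _ _ F, of n "\<lambda>k. norm (d k)"] by simp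
  qed
  then show thesis by (rule that)
qed

lemma normalized_eigenvector:
  assumes "is_eigenvalue d mu"
  obtains v where "v \<in> l2Z" "l2Z_inner v v = 1" "jacobi d v = (\<lambda>n. mu * v n)"
proof -
  obtain u n0 where u: "u \<in> l2Z" "u n0 \<noteq> 0" and eig: "jacobi d u = (\<lambda>n. mu * u n)"
    using assms unfolding is_eigenvalue_def by fastforce
  define nu where "nu = (\<Sum>\<^sub>\<infinity>n. (cmod (u n))\<^sup>2)"
  have nu: "nu > 0" unfolding nu_def
    by (rule infsum_pos_elem[of _ n0]) (use u in \<open>auto simp: l2Z_iff\<close>)
  define v where "v = (\<lambda>n. complex_of_real (1 / sqrt nu) * u n)"
  have v: "v \<in> l2Z" unfolding v_def by (rule l2Z_cmult[OF u(1)])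
  have "(\<Sum>\<^sub>\<infinity>n. (cmod (v n))\<^sup>2) = (\<Sum>\<^sub>\<infinity>n. (1 / nu) * (cmod (u n))\<^sup>2)"
    using nu by (intro infsum_cong) (simp add: v_def norm_mult norm_divide power_divide)
  also have "\<dots> = (1 / nu) * nu"
    unfolding nu_def by (rule infsum_cmult_right) (use u in \<open>simp add: l2Z_iff\<close>)
  finally have "l2Z_inner v v = 1" using inner_self[OF v] nu by simp
  moreover have "jacobi d v n = complex_of_real (1 / sqrt nu) * jacobi d u n" for n
    by (simp add: jacobi_def v_def algebra_simps)
  then have "jacobi d v = (\<lambda>n. mu * v n)" using eig by (simp add: fun_eq_iff v_def mult_ac)
  ultimately show thesis using that v by blast
qed

text \<open>The heart of the argument: an eigenvector for an eigenvalue that is not an interior point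
  of Num(J) vanishes wherever Im d differs from Im mu (otherwise its defect is nonzero).\<close>

lemma boundary_eigenvector_vanishes:
  assumes dB: "\<And>n. cmod (d n) \<le> B" and v: "v \<in> l2Z" "l2Z_inner v v = 1"
    and eig: "jacobi d v = (\<lambda>n. mu * v n)" and not_interior: "mu \<notin> interior (numrange d)"
    and "Im (d n) \<noteq> Im mu"
  shows "v n = 0"
proof -
  have "eigen_defect d v mu n = 0"
    using eigenvalue_interior_if_defect[OF dB v eig] not_interior by blast
  moreover have "mu - cnj mu - d n + cnj (d n) \<noteq> 0"
    using \<open>Im (d n) \<noteq> Im mu\<close> by (simp add: complex_eq_iff)
  ultimately show ?thesis by (simp add: eigen_defect_def)
qed

text \<open>Nonreal eigenvalue: since Im d \<rightarrow> 0, such an eigenvector vanishes far out, hence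
  everywhere.\<close>

lemma eigenvector_vanishes_nonreal:
  assumes d0: "(d \<longlongrightarrow> 0) cofinite" and eig: "jacobi d v = (\<lambda>n. mu * v n)"
    and "Im mu \<noteq> 0" and support: "\<And>n. Im (d n) \<noteq> Im mu \<Longrightarrow> v n = 0"
  shows "v n = 0"
proof -
  have "eventually (\<lambda>n. cmod (d n) < \<bar>Im mu\<bar>) cofinite"
    using \<open>Im mu \<noteq> 0\<close> by (intro order_tendstoD(2)[OF tendsto_norm_zero[OF d0]]) simp
  then have "finite {n. \<not> cmod (d n) < \<bar>Im mu\<bar>}" by (simp add: eventually_cofinite)
  then obtain k where k: "abs ` {n. \<not> cmod (d n) < \<bar>Im mu\<bar>} \<subseteq> {..k}"
    using finite_int_iff_bounded_le by blast
  have far: "v n = 0" if "n > k" for n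
  proof (rule support)
    have "cmod (d n) < \<bar>Im mu\<bar>" using k that by force
    then show "Im (d n) \<noteq> Im mu" using abs_Im_le_cmod[of "d n"] by auto
  qed
  have "v (n - 1) + v (n + 1) = (mu - d n) * v n" for n
    using fun_cong[OF eig, of n] by (simp add: jacobi_def algebra_simps)
  then show ?thesis by (rule recurrence_unique_continuation[where m = "k + 1"]) (use far in auto)
qed

text \<open>Real eigenvalue: where v is nonzero, d is real, so the real and imaginary parts of v solve
  a real recurrence with potential Re d; they vanish on the infinite set where Im d \<noteq> 0.\<close>

lemma eigenvector_vanishes_real:
  assumes v: "v \<in> l2Z" and eig: "jacobi d v = (\<lambda>n. mu * v n)"
    and "Im mu = 0" and support: "\<And>n. Im (d n) \<noteq> Im mu \<Longrightarrow> v n = 0"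
    and nonreal: "infinite {n. Im (d n) \<noteq> 0}"
    and moment: "(\<lambda>k. \<bar>real_of_int k\<bar> * \<bar>Re (d k)\<bar>) summable_on UNIV"
  shows "v n = 0"
proof -
  have real_rec: "v (n - 1) + v (n + 1) = complex_of_real (Re mu - Re (d n)) * v n" for n
  proof (cases "v n = 0")
    case False
    then have "d n = complex_of_real (Re (d n))" "mu = complex_of_real (Re mu)"
      using support[of n] \<open>Im mu = 0\<close> by (auto simp: complex_eq_iff)
    then show ?thesis using fun_cong[OF eig, of n]
      by (simp add: jacobi_def algebra_simps)
  qed (use fun_cong[OF eig, of n] in \<open>simp add: jacobi_def\<close>)
  have zeros: "infinite {n. f (v n) = 0}" if "f 0 = 0" for f :: "complex \<Rightarrow> real"
  proof -
    have "{n. Im (d n) \<noteq> 0} \<subseteq> {n. f (v n) = 0}" using \<open>Im mu = 0\<close> support that by auto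
    then show ?thesis using nonreal finite_subset by blast
  qed
  have l2: "(\<lambda>n. (f (v n))\<^sup>2) summable_on UNIV" if f: "\<And>z. \<bar>f z\<bar> \<le> cmod z" for f :: "complex \<Rightarrow> real"
  proof (rule summable_on_comparison_test[OF v[unfolded l2Z_iff]])
    fix n
    show "(f (v n))\<^sup>2 \<le> (cmod (v n))\<^sup>2" using power_mono[OF f abs_ge_zero, of "v n" 2] by simp
  qed simp
  have "Re (v n) = 0"
    by (rule real_solution_vanishes[where r = "Re mu", OF _ l2 moment zeros])
      (use arg_cong[OF real_rec, of Re] abs_Re_le_cmod in simp_all)
  moreover have "Im (v n) = 0"
    by (rule real_solution_vanishes[where r = "Re mu", OF _ l2 moment zeros])
      (use arg_cong[OF real_rec, of Im] abs_Im_le_cmod in simp_all)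
  ultimately show ?thesis by (simp add: complex_eq_iff)
qed

theorem mainTheorem12:
  fixes d :: "int \<Rightarrow> complex"
  assumes "(d \<longlongrightarrow> 0) cofinite"
    and "\<forall>n. Im (d n) = 0 \<or> Im (d (n + 1)) = 0"
    and "infinite {n. Im (d n) \<noteq> 0}"
    and "(\<lambda>k. \<bar>real_of_int k\<bar> * \<bar>Re (d k)\<bar>) summable_on UNIV"
  shows "\<not> (\<exists>mu. boundary_eigenvalue d mu)"
proof
  assume "\<exists>mu. boundary_eigenvalue d mu"
  then obtain mu where eigenvalue: "is_eigenvalue d mu" and "mu \<in> frontier (numrange d)"
    unfolding boundary_eigenvalue_def by blast
  then have not_interior: "mu \<notin> interior (numrange d)" by (simp add: frontier_def)
  obtain B where dB: "\<And>n. cmod (d n) \<le> B"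
    using bounded_if_tendsto_cofinite[OF assms(1)] by blast
  obtain v where v: "v \<in> l2Z" "l2Z_inner v v = 1" and eig: "jacobi d v = (\<lambda>n. mu * v n)"
    using normalized_eigenvector[OF eigenvalue] by blast
  have support: "\<And>n. Im (d n) \<noteq> Im mu \<Longrightarrow> v n = 0"
    by (rule boundary_eigenvector_vanishes[OF dB v eig not_interior])
  have "v n = 0" for n
  proof (cases "Im mu = 0")
    case True
    then show ?thesis by (rule eigenvector_vanishes_real[OF v(1) eig _ support assms(3,4)])
  next
    case False
    then show ?thesis by (rule eigenvector_vanishes_nonreal[OF assms(1) eig _ support])
  qed
  then have "l2Z_inner v v = 0" by (simp add: l2Z_inner_def)
  then show False using v(2) by simp
qed

end
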